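(* For integers $M,N,m,l$ with $1\leq m\leq l<N$ and $M-m\geq N-l\geq 1$, the polynomial \[ {M\brack m}{N\brack l}-{M\brack m-1}{N\brack l+1} \] has nonnegative coefficients as a polynomial in $q$.
   Context: ${n\brack m}=\prod_{i=0}^{m-1}\frac{1-q^{n-i}}{1-q^{m-i}}$ denotes the Gaussian polynomial ($q$-binomial coefficient) for integers $n\ge m\ge0$. *)

theory Defs
  imports "HOL-Computational_Algebra.Polynomial"
begin

text \<open>Gaussian polynomial [n brack m] = prod_{i=0}^{m-1} (1-q^(n-i))/(1-q^(m-i)),
  as a polynomial in q with rational coefficients (the quotient is exact).\<close>
definition gauss_poly :: "nat \<Rightarrow> nat \<Rightarrow> rat poly" where
  "gauss_poly n m =
     (\<Prod>i<m. 1 - monom 1 (n - i)) div (\<Prod>i<m. 1 - monom 1 (m - i))"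

end

theory Submission
  imports Defs
begin

text \<open>
  Write G(x,y) for the Gaussian polynomial [x+y brack x] on the integer lattice. The difference
  D(m,a,l,b,k) = G(m,a) G(l,b) - q^k G(m-1,a+1) G(l+1,b-1) is the polynomial of the theorem for
  a = M - m, b = N - l, k = 0. Expanding one factor of each product by a q-Pascal rule writes D
  as a sum of two D's of smaller size m+a+l+b, multiplied by powers of q. On the region
  m - 1 \<le> l, b - 1 \<le> a, k \<le> (l - m) + (a - b) + 2 one of the four resulting recurrences keeps
  both pieces in the region: expand along (m,a) if a \<ge> b and along (l,b) if l \<ge> m, with the
  Pascal rule chosen according to k = 0 or k > 0. The only point where neither applies is
  l = m - 1, b = a + 1, k = 0, where D = 0. Nonnegativity follows by induction on m+a+l+b.
\<close>

fun qbinom :: "nat \<Rightarrow> nat \<Rightarrow> 'a::comm_semiring_1 poly" where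
  "qbinom n 0 = 1"
| "qbinom 0 (Suc k) = 0"
| "qbinom (Suc n) (Suc k) = qbinom n k + monom 1 (Suc k) * qbinom n (Suc k)"

definition qfact :: "nat \<Rightarrow> 'a::comm_ring_1 poly" where
  "qfact n = (\<Prod>i=1..n. 1 - monom 1 i)"

lemma qfact_0 [simp]: "qfact 0 = 1"
  by (simp add: qfact_def)

lemma qfact_Suc: "qfact (Suc n) = qfact n * (1 - monom 1 (Suc n))"
  by (simp add: qfact_def)

lemma qfact_nonzero: "qfact n \<noteq> (0 :: 'a::idom poly)"
proof -
  have "poly (qfact n) 0 = (1 :: 'a)"
    by (induction n) (simp_all add: qfact_Suc poly_monom)
  then show ?thesis by auto
qed

lemma qbinom_eq_0: "n < k \<Longrightarrow> qbinom n k = 0"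
  by (induction n k rule: qbinom.induct) auto

lemma qbinom_qfact:
  "k \<le> n \<Longrightarrow> qbinom n k * qfact k * qfact (n - k) = (qfact n :: 'a::comm_ring_1 poly)"
proof (induction n k rule: qbinom.induct)
  case (3 n j)
  show ?case
  proof (cases "j = n")
    case True
    then show ?thesis using "3.IH"(1) by (simp add: qbinom_eq_0 qfact_Suc flip: mult.assoc)
  next
    case False
    then have jn: "j < n" using "3.prems" by simp
    then have diff: "n - j = Suc (n - Suc j)" by simp
    have "qbinom (Suc n) (Suc j) * qfact (Suc j) * qfact (Suc n - Suc j)
        = qbinom n j * qfact j * qfact (n - j) * (1 - monom 1 (Suc j))
          + monom 1 (Suc j) * (qbinom n (Suc j) * qfact (Suc j) * qfact (n - Suc j))
            * (1 - monom 1 (n - j) :: 'a poly)"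
      by (simp add: qfact_Suc diff algebra_simps)
    also have "\<dots> = qfact n * (1 - monom 1 (Suc j)) + monom 1 (Suc j) * qfact n * (1 - monom 1 (n - j))"
      using "3.IH" jn by simp
    also have "\<dots> = qfact n * (1 - monom 1 (Suc j + (n - j)))"
      by (simp add: algebra_simps mult_monom)
    also have "\<dots> = qfact (Suc n)"
      using jn by (simp add: qfact_Suc)
    finally show ?thesis .
  qed
qed auto

lemma qbinom_symmetric:
  assumes "k \<le> n" shows "qbinom n k = (qbinom n (n - k) :: 'a::idom poly)"
proof -
  have "qbinom n k * (qfact k * qfact (n - k)) = qbinom n (n - k) * (qfact k * qfact (n - k) :: 'a poly)"
    using qbinom_qfact[OF assms, where 'a='a] qbinom_qfact[of "n - k" n, where 'a='a] assms
    by (simp add: mult_ac)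
  then show ?thesis by (simp add: qfact_nonzero)
qed

lemma prod_falling_qfact:
  "k \<le> n \<Longrightarrow> (\<Prod>i<k. 1 - monom 1 (n - i)) * qfact (n - k) = (qfact n :: 'a::comm_ring_1 poly)"
proof (induction k)
  case (Suc k)
  then have "n - k = Suc (n - Suc k)" by simp
  with Suc show ?case by (simp add: qfact_Suc mult_ac)
qed simp

lemma gauss_poly_eq_qbinom: "k \<le> n \<Longrightarrow> gauss_poly n k = qbinom n k"
proof -
  assume kn: "k \<le> n"
  have "(\<Prod>i<k. 1 - monom 1 (n - i)) * qfact (n - k) = qbinom n k * qfact k * (qfact (n - k) :: rat poly)"
    unfolding prod_falling_qfact[OF kn] qbinom_qfact[OF kn] ..
  then have "(\<Prod>i<k. 1 - monom 1 (n - i)) = qbinom n k * (qfact k :: rat poly)"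
    by (simp add: qfact_nonzero)
  moreover have "(\<Prod>i<k. 1 - monom 1 (k - i)) = (qfact k :: rat poly)"
    using prod_falling_qfact[of k k] by simp
  ultimately show ?thesis
    by (simp add: gauss_poly_def qfact_nonzero)
qed

definition nonneg_coeffs :: "'a::linordered_semidom poly \<Rightarrow> bool" where
  "nonneg_coeffs p \<longleftrightarrow> (\<forall>i. 0 \<le> coeff p i)"

lemma nonneg_coeffs_0 [simp]: "nonneg_coeffs 0"
  and nonneg_coeffs_1 [simp]: "nonneg_coeffs 1"
  and nonneg_coeffs_monom_1 [simp]: "nonneg_coeffs (monom 1 n)"
  by (simp_all add: nonneg_coeffs_def coeff_1)

lemma nonneg_coeffs_add: "nonneg_coeffs p \<Longrightarrow> nonneg_coeffs q \<Longrightarrow> nonneg_coeffs (p + q)"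
  by (simp add: nonneg_coeffs_def)

lemma nonneg_coeffs_mult: "nonneg_coeffs p \<Longrightarrow> nonneg_coeffs q \<Longrightarrow> nonneg_coeffs (p * q)"
  unfolding nonneg_coeffs_def coeff_mult by (auto intro!: sum_nonneg)

lemma nonneg_coeffs_qbinom: "nonneg_coeffs (qbinom n k)"
  by (induction n k rule: qbinom.induct) (auto intro!: nonneg_coeffs_add nonneg_coeffs_mult)

text \<open>Zero off the quadrant, so that both Pascal rules hold at every lattice point with
  x + y > 0, the axes included.\<close>
definition qbinom_grid :: "int \<Rightarrow> int \<Rightarrow> 'a::idom poly" where
  "qbinom_grid x y = (if x < 0 \<or> y < 0 then 0 else qbinom (nat (x + y)) (nat x))"

lemma qbinom_grid_neg [simp]: "x < 0 \<or> y < 0 \<Longrightarrow> qbinom_grid x y = 0"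
  by (simp add: qbinom_grid_def)

lemma qbinom_grid_swap: "qbinom_grid x y = qbinom_grid y x"
proof (cases "x < 0 \<or> y < 0")
  case False
  then have "nat x \<le> nat (x + y)" "nat (x + y) - nat x = nat y" by auto
  with False show ?thesis
    using qbinom_symmetric[of "nat x" "nat (x + y)"] by (simp add: qbinom_grid_def add.commute)
qed (auto simp: qbinom_grid_def)

lemma qbinom_grid_pascal:
  assumes "x \<ge> 0" "y \<ge> 0" "x + y > 0"
  shows "qbinom_grid x y = qbinom_grid (x - 1) y + monom 1 (nat x) * qbinom_grid x (y - 1)"
proof (cases "x = 0")
  case True
  then show ?thesis using assms by (simp add: qbinom_grid_def)
next
  case False
  define n j where "n = nat (x - 1 + y)" and "j = nat (x - 1)"
  have x: "nat x = Suc j" and xy: "nat (x + y) = Suc n"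
    using assms False by (simp_all add: n_def j_def)
  have "qbinom_grid x y = (qbinom (Suc n) (Suc j) :: 'a poly)"
    and "qbinom_grid (x - 1) y = (qbinom n j :: 'a poly)"
    using assms False by (simp_all add: qbinom_grid_def x xy n_def j_def)
  moreover have "qbinom_grid x (y - 1) = (qbinom n (Suc j) :: 'a poly)"
    using assms False
    by (cases "y = 0") (auto simp: qbinom_grid_def n_def j_def x qbinom_eq_0 algebra_simps)
  ultimately show ?thesis by (simp add: x)
qed

lemma qbinom_grid_pascal':
  assumes "x \<ge> 0" "y \<ge> 0" "x + y > 0"
  shows "qbinom_grid x y = monom 1 (nat y) * qbinom_grid (x - 1) y + qbinom_grid x (y - 1)"
  using qbinom_grid_pascal[of y x] assms by (simp add: qbinom_grid_swap add.commute)

lemma nonneg_coeffs_qbinom_grid: "nonneg_coeffs (qbinom_grid x y)"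
  by (simp add: qbinom_grid_def nonneg_coeffs_qbinom)

lemma monom_1_Suc: "monom 1 (Suc n) = monom 1 n * (monom 1 1 :: 'a::comm_semiring_1 poly)"
  by (simp add: mult_monom)

definition qdiff :: "int \<Rightarrow> int \<Rightarrow> int \<Rightarrow> int \<Rightarrow> nat \<Rightarrow> 'a::idom poly" where
  "qdiff m a l b k = qbinom_grid m a * qbinom_grid l b
     - monom 1 k * (qbinom_grid (m - 1) (a + 1) * qbinom_grid (l + 1) (b - 1))"

lemma qdiff_pascal_ma':
  assumes "m \<ge> 1" "a \<ge> 0"
  shows "qdiff m a l b k = monom 1 (nat a) * qdiff (m - 1) a l b (Suc k) + qdiff m (a - 1) l b k"
proof -
  have top: "qbinom_grid m a = monom 1 (nat a) * qbinom_grid (m - 1) a + qbinom_grid m (a - 1)"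
    using qbinom_grid_pascal'[of m a] assms by simp
  have bottom: "qbinom_grid (m - 1) (a + 1)
      = monom 1 (nat a) * monom 1 1 * qbinom_grid (m - 2) (a + 1) + qbinom_grid (m - 1) a"
    using qbinom_grid_pascal'[of "m - 1" "a + 1"] assms by (simp add: nat_add_distrib mult_monom)
  show ?thesis
    unfolding qdiff_def top bottom monom_1_Suc by (simp add: algebra_simps)
qed

lemma qdiff_pascal_ma:
  assumes "m \<ge> 1" "a \<ge> 0"
  shows "qdiff m a l b (Suc k) = qdiff (m - 1) a l b (Suc k) + monom 1 (nat m) * qdiff m (a - 1) l b k"
proof -
  have top: "qbinom_grid m a = qbinom_grid (m - 1) a + monom 1 (nat m) * qbinom_grid m (a - 1)"
    using qbinom_grid_pascal[of m a] assms by simp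
  have bottom: "qbinom_grid (m - 1) (a + 1)
      = qbinom_grid (m - 2) (a + 1) + monom 1 (nat (m - 1)) * qbinom_grid (m - 1) a"
    using qbinom_grid_pascal[of "m - 1" "a + 1"] assms by simp
  have shift_m: "monom 1 (nat m) = monom 1 (nat (m - 1)) * (monom 1 1 :: 'a poly)"
    using assms by (simp add: mult_monom Suc_nat_eq_nat_zadd1)
  show ?thesis
    unfolding qdiff_def top bottom monom_1_Suc shift_m by (simp add: algebra_simps)
qed

lemma qdiff_pascal_lb:
  assumes "l \<ge> 0" "b \<ge> 1"
  shows "qdiff m a l b k = qdiff m a (l - 1) b k + monom 1 (nat l) * qdiff m a l (b - 1) (Suc k)"
proof -
  have top: "qbinom_grid l b = qbinom_grid (l - 1) b + monom 1 (nat l) * qbinom_grid l (b - 1)"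
    using qbinom_grid_pascal[of l b] assms by simp
  have bottom: "qbinom_grid (l + 1) (b - 1)
      = qbinom_grid l (b - 1) + monom 1 (nat l) * monom 1 1 * qbinom_grid (l + 1) (b - 2)"
    using qbinom_grid_pascal[of "l + 1" "b - 1"] assms by (simp add: nat_add_distrib mult_monom)
  show ?thesis
    unfolding qdiff_def top bottom monom_1_Suc by (simp add: algebra_simps)
qed

lemma qdiff_pascal_lb':
  assumes "l \<ge> 0" "b \<ge> 1"
  shows "qdiff m a l b (Suc k) = monom 1 (nat b) * qdiff m a (l - 1) b k + qdiff m a l (b - 1) (Suc k)"
proof -
  have top: "qbinom_grid l b = monom 1 (nat b) * qbinom_grid (l - 1) b + qbinom_grid l (b - 1)"
    using qbinom_grid_pascal'[of l b] assms by simp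
  have bottom: "qbinom_grid (l + 1) (b - 1)
      = monom 1 (nat (b - 1)) * qbinom_grid l (b - 1) + qbinom_grid (l + 1) (b - 2)"
    using qbinom_grid_pascal'[of "l + 1" "b - 1"] assms by simp
  have shift_b: "monom 1 (nat b) = monom 1 (nat (b - 1)) * (monom 1 1 :: 'a poly)"
    using assms by (simp add: mult_monom Suc_nat_eq_nat_zadd1)
  show ?thesis
    unfolding qdiff_def top bottom monom_1_Suc shift_b by (simp add: algebra_simps)
qed

lemma nonneg_coeffs_qdiff_boundary:
  "m \<le> 0 \<or> b \<le> 0 \<Longrightarrow> nonneg_coeffs (qdiff m a l b k :: 'a::linordered_idom poly)"
  by (auto simp: qdiff_def intro!: nonneg_coeffs_mult nonneg_coeffs_qbinom_grid)

lemma qdiff_corner: "qdiff m a (m - 1) (a + 1) 0 = 0"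
  by (simp add: qdiff_def mult.commute)

lemma nonneg_coeffs_monom_mult_add:
  "nonneg_coeffs p \<Longrightarrow> nonneg_coeffs q \<Longrightarrow> nonneg_coeffs (monom 1 n * p + q)"
  "nonneg_coeffs p \<Longrightarrow> nonneg_coeffs q \<Longrightarrow> nonneg_coeffs (p + monom 1 n * q)"
  by (simp_all add: nonneg_coeffs_add nonneg_coeffs_mult)

lemma nonneg_coeffs_qdiff:
  assumes "m - 1 \<le> l" "b - 1 \<le> a" "int k \<le> l - m + a - b + 2"
  shows "nonneg_coeffs (qdiff m a l b k :: 'a::linordered_idom poly)"
proof -
  obtain n where "m + a + l + b \<le> int n"
    using zle_int nat_le_iff by blast
  then show ?thesis using assms
  proof (induction n arbitrary: m a l b k)
    case 0
    then show ?case by (cases "m \<le> 0 \<or> b \<le> 0") (auto intro: nonneg_coeffs_qdiff_boundary)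
  next
    case (Suc n)
    consider "m \<le> 0 \<or> b \<le> 0"
      | (ma_0) "a \<ge> b" "m \<ge> 1" "b \<ge> 1" "k = 0"
      | (ma_Suc) k' where "a \<ge> b" "m \<ge> 1" "b \<ge> 1" "k = Suc k'"
      | (lb_0) "l \<ge> m" "m \<ge> 1" "b \<ge> 1" "a < b" "k = 0"
      | (lb_Suc) k' where "l \<ge> m" "m \<ge> 1" "b \<ge> 1" "a < b" "k = Suc k'"
      | (corner) "l = m - 1" "b = a + 1" "k = 0"
      using Suc.prems by (cases k) fastforce+
    then show ?case
    proof cases
      case 1
      then show ?thesis by (rule nonneg_coeffs_qdiff_boundary)
    next
      case ma_0
      then show ?thesis
        using Suc.prems
        by (subst qdiff_pascal_ma') (auto intro!: nonneg_coeffs_monom_mult_add Suc.IH)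
    next
      case (ma_Suc k')
      then show ?thesis
        unfolding \<open>k = Suc k'\<close> using Suc.prems[unfolded \<open>k = Suc k'\<close>]
        by (subst qdiff_pascal_ma) (auto intro!: nonneg_coeffs_monom_mult_add Suc.IH)
    next
      case lb_0
      then show ?thesis
        using Suc.prems
        by (subst qdiff_pascal_lb) (auto intro!: nonneg_coeffs_monom_mult_add Suc.IH)
    next
      case (lb_Suc k')
      then show ?thesis
        unfolding \<open>k = Suc k'\<close> using Suc.prems[unfolded \<open>k = Suc k'\<close>]
        by (subst qdiff_pascal_lb') (auto intro!: nonneg_coeffs_monom_mult_add Suc.IH)
    next
      case corner
      then show ?thesis by (simp add: qdiff_corner)
    qed
  qed
qed

theorem lemma3p1:
  fixes M N m l :: int
  assumes "1 \<le> m" and "m \<le> l" and "l < N" and "M - m \<ge> N - l" and "N - l \<ge> 1"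
  shows "\<forall>k. coeff (gauss_poly (nat M) (nat m) * gauss_poly (nat N) (nat l)
                     - gauss_poly (nat M) (nat (m - 1)) * gauss_poly (nat N) (nat (l + 1))) k \<ge> 0"
proof -
  have "gauss_poly (nat M) (nat m) * gauss_poly (nat N) (nat l)
          - gauss_poly (nat M) (nat (m - 1)) * gauss_poly (nat N) (nat (l + 1))
        = qdiff m (M - m) l (N - l) 0"
    using assms by (simp add: qdiff_def qbinom_grid_def gauss_poly_eq_qbinom)
  moreover have "nonneg_coeffs (qdiff m (M - m) l (N - l) 0 :: rat poly)"
    using assms by (intro nonneg_coeffs_qdiff) auto
  ultimately show ?thesis by (simp add: nonneg_coeffs_def)
qed

end
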